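(* Consider a nonatomic routing game in which no two paths in $\mathcal{P}$ share an edge, and whose edge cost functions are continuous and strictly increasing. Viewing each path cost $c_P$ as a function of the flow on $P$, suppose that for each commodity $i$, $c_P(0)=c_{P'}(0)$ for all $P,P'\in\mathcal{P}_i$. Then $\mathrm{PoTS}=1$.
   Context: A nonatomic routing game: a directed network $(V,E)$, commodities $i=1,\dots,k$ with sizes $r_i>0$ and finite nonempty sets $\mathcal{P}_i$ of $s_i$–$t_i$ paths, $\mathcal{P}=\bigcup_i\mathcal{P}_i$; edge costs $c_e:\mathbb{R}_+\to\mathbb{R}_+$. A flow $f\in\mathbb{R}_+^{\mathcal{P}}$ is feasible if $\sum_{P\in\mathcal{P}_i}f_P=r_i$ for each $i$; $f_e=\sum_{P\ni e}f_P$, $c_P(f)=\sum_{e\in P}c_e(f_e)$, cost $C(f)=\sum_ec_e(f_e)f_e$. An equilibrium flow is a feasible $f$ with $c_P(f)\le c_{P'}(f)$ for every $i$, every $P\in\mathcal{P}_i$ with $f_P>0$ and every $P'\in\mathcal{P}_i$. A transition is a feasible flow $f$ such that for every $i$ and every $P\in\mathcal{P}_i$ with $f_P>0$ there is an equilibrium flow $f'$ with $f'_P>0$. $\mathrm{PoTS}$ is the infimum of the costs of transitions divided by the minimum cost of a feasible flow. *)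

theory Defs
  imports "HOL-Analysis.Analysis"
begin

definition is_path ::
  "'v set \<Rightarrow> 'e set \<Rightarrow> ('e \<Rightarrow> 'v) \<Rightarrow> ('e \<Rightarrow> 'v) \<Rightarrow> 'v \<Rightarrow> 'v \<Rightarrow> 'e list \<Rightarrow> bool" where
  "is_path V E etail ehead u w p \<longleftrightarrow>
     set p \<subseteq> E \<and> u \<in> V \<and>
     (p = [] \<longrightarrow> u = w) \<and>
     (p \<noteq> [] \<longrightarrow> etail (hd p) = u \<and> ehead (last p) = w) \<and>
     (\<forall>j. Suc j < length p \<longrightarrow> ehead (p ! j) = etail (p ! Suc j)) \<and>
     distinct (u # map ehead p)"

definition routing_game ::
  "'v set \<Rightarrow> 'e set \<Rightarrow> ('e \<Rightarrow> 'v) \<Rightarrow> ('e \<Rightarrow> 'v) \<Rightarrow> nat \<Rightarrow> (nat \<Rightarrow> 'v) \<Rightarrow> (nat \<Rightarrow> 'v)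
     \<Rightarrow> (nat \<Rightarrow> real) \<Rightarrow> (nat \<Rightarrow> 'e list set) \<Rightarrow> ('e \<Rightarrow> real \<Rightarrow> real) \<Rightarrow> bool" where
  "routing_game V E etail ehead k s t r Ps c \<longleftrightarrow>
     finite V \<and> finite E \<and> (\<forall>e\<in>E. etail e \<in> V \<and> ehead e \<in> V) \<and>
     k \<ge> 1 \<and>
     (\<forall>i\<in>{1..k}. s i \<in> V \<and> t i \<in> V \<and> s i \<noteq> t i \<and> r i > 0 \<and>
        finite (Ps i) \<and> Ps i \<noteq> {} \<and>
        (\<forall>P\<in>Ps i. is_path V E etail ehead (s i) (t i) P)) \<and>
     (\<forall>i\<in>{1..k}. \<forall>j\<in>{1..k}. i \<noteq> j \<longrightarrow> Ps i \<inter> Ps j = {}) \<and>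
     (\<forall>e\<in>E. \<forall>x\<ge>0. c e x \<ge> 0)"

definition all_paths :: "nat \<Rightarrow> (nat \<Rightarrow> 'e list set) \<Rightarrow> 'e list set" where
  "all_paths k Ps = (\<Union>i\<in>{1..k}. Ps i)"

definition feasible ::
  "nat \<Rightarrow> (nat \<Rightarrow> real) \<Rightarrow> (nat \<Rightarrow> 'e list set) \<Rightarrow> ('e list \<Rightarrow> real) \<Rightarrow> bool" where
  "feasible k r Ps f \<longleftrightarrow>
     (\<forall>P. f P \<ge> 0) \<and> (\<forall>P. P \<notin> all_paths k Ps \<longrightarrow> f P = 0) \<and>
     (\<forall>i\<in>{1..k}. (\<Sum>P\<in>Ps i. f P) = r i)"

definition edge_flow :: "nat \<Rightarrow> (nat \<Rightarrow> 'e list set) \<Rightarrow> ('e list \<Rightarrow> real) \<Rightarrow> 'e \<Rightarrow> real" where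
  "edge_flow k Ps f e = (\<Sum>P\<in>{P\<in>all_paths k Ps. e \<in> set P}. f P)"

definition path_cost ::
  "nat \<Rightarrow> (nat \<Rightarrow> 'e list set) \<Rightarrow> ('e \<Rightarrow> real \<Rightarrow> real) \<Rightarrow> ('e list \<Rightarrow> real) \<Rightarrow> 'e list \<Rightarrow> real" where
  "path_cost k Ps c f P = sum_list (map (\<lambda>e. c e (edge_flow k Ps f e)) P)"

definition total_cost ::
  "'e set \<Rightarrow> nat \<Rightarrow> (nat \<Rightarrow> 'e list set) \<Rightarrow> ('e \<Rightarrow> real \<Rightarrow> real) \<Rightarrow> ('e list \<Rightarrow> real) \<Rightarrow> real" where
  "total_cost E k Ps c f = (\<Sum>e\<in>E. c e (edge_flow k Ps f e) * edge_flow k Ps f e)"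

definition equilibrium ::
  "nat \<Rightarrow> (nat \<Rightarrow> real) \<Rightarrow> (nat \<Rightarrow> 'e list set) \<Rightarrow> ('e \<Rightarrow> real \<Rightarrow> real) \<Rightarrow> ('e list \<Rightarrow> real) \<Rightarrow> bool" where
  "equilibrium k r Ps c f \<longleftrightarrow> feasible k r Ps f \<and>
     (\<forall>i\<in>{1..k}. \<forall>P\<in>Ps i. \<forall>P'\<in>Ps i. f P > 0 \<longrightarrow> path_cost k Ps c f P \<le> path_cost k Ps c f P')"

definition transition ::
  "nat \<Rightarrow> (nat \<Rightarrow> real) \<Rightarrow> (nat \<Rightarrow> 'e list set) \<Rightarrow> ('e \<Rightarrow> real \<Rightarrow> real) \<Rightarrow> ('e list \<Rightarrow> real) \<Rightarrow> bool" where
  "transition k r Ps c f \<longleftrightarrow> feasible k r Ps f \<and>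
     (\<forall>i\<in>{1..k}. \<forall>P\<in>Ps i. f P > 0 \<longrightarrow> (\<exists>f'. equilibrium k r Ps c f' \<and> f' P > 0))"

definition PoTS ::
  "'e set \<Rightarrow> nat \<Rightarrow> (nat \<Rightarrow> real) \<Rightarrow> (nat \<Rightarrow> 'e list set) \<Rightarrow> ('e \<Rightarrow> real \<Rightarrow> real) \<Rightarrow> ereal" where
  "PoTS E k r Ps c =
     (INF f\<in>{f. transition k r Ps c f}. ereal (total_cost E k Ps c f)) /
     (INF f\<in>{f. feasible k r Ps f}. ereal (total_cost E k Ps c f))"

end

theory Submission
  imports Defs
begin

(* Since no two paths share an edge, the cost of a path depends only on its own flow, through
   a continuous strictly increasing function; within a commodity all these functions start at
   the same value.  Raising a common cost level L and letting each path carry the flow at which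
   its cost reaches L ("water filling"), the intermediate value theorem yields a level at which
   the flows add up to the demand.  This equilibrium uses every path, so every feasible flow is a
   transition and PoTS is the optimal cost divided by itself.  That quotient is 1 because the
   optimal cost is finite and positive: some path of commodity 1 always carries at least the
   average flow, which costs a fixed positive amount on its first edge. *)

lemma continuous_on_sum_list:
  fixes c :: "'e \<Rightarrow> 'a::topological_space \<Rightarrow> 'b::topological_monoid_add"
  assumes "\<And>e. e \<in> set es \<Longrightarrow> continuous_on S (c e)"
  shows "continuous_on S (\<lambda>x. \<Sum>e\<leftarrow>es. c e x)"
  using assms by (induction es) (auto intro: continuous_intros)

lemma strict_mono_on_sum_list:
  fixes c :: "'e \<Rightarrow> 'a::order \<Rightarrow> 'b::{monoid_add, strict_ordered_ab_semigroup_add}"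
  assumes "es \<noteq> []" and "\<And>e. e \<in> set es \<Longrightarrow> strict_mono_on S (c e)"
  shows "strict_mono_on S (\<lambda>x. \<Sum>e\<leftarrow>es. c e x)"
proof (rule strict_mono_onI)
  fix x y assume "x \<in> S" "y \<in> S" "x < y"
  then show "(\<Sum>e\<leftarrow>es. c e x) < (\<Sum>e\<leftarrow>es. c e y)"
    using assms by (intro sum_list_strict_mono) (auto dest: strict_mono_onD)
qed

lemma exists_ge_average:
  fixes f :: "'a \<Rightarrow> real"
  assumes "finite A" and "A \<noteq> {}"
  obtains a where "a \<in> A" and "(\<Sum>b\<in>A. f b) / card A \<le> f a"
proof (rule ccontr)
  assume "\<not> thesis"
  then have "\<forall>a\<in>A. f a < (\<Sum>b\<in>A. f b) / card A"
    using that by force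
  then have "(\<Sum>a\<in>A. f a) < (\<Sum>a\<in>A. (\<Sum>b\<in>A. f b) / card A)"
    using assms by (intro sum_strict_mono) auto
  then show False
    using assms by simp
qed

lemma continuous_clamped_inverse:
  fixes h :: "real \<Rightarrow> real"
  assumes cont: "continuous_on {a..b} h" and mono: "strict_mono_on {a..b} h" and "a \<le> b"
  obtains g where "continuous_on UNIV g"
    and "\<And>L. g L \<in> {a..b}" and "\<And>L. h (g L) = max (h a) (min (h b) L)"
proof -
  define clamp where "clamp L = max (h a) (min (h b) L)" for L
  have hab: "h a \<le> h b"
    using strict_mono_on_leD[OF mono] \<open>a \<le> b\<close> by simp
  have inverse: "inv_into {a..b} h (h x) = x" if "x \<in> {a..b}" for x
    using strict_mono_on_imp_inj_on[OF mono] that by simp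
  have image: "h ` {a..b} = {h a..h b}"
  proof
    show "h ` {a..b} \<subseteq> {h a..h b}"
      using strict_mono_on_leD[OF mono] by auto
    show "{h a..h b} \<subseteq> h ` {a..b}"
      using IVT'[of h a _ b] cont \<open>a \<le> b\<close> by fastforce
  qed
  have "continuous_on {h a..h b} (inv_into {a..b} h)"
    using continuous_on_inv[OF cont compact_Icc] inverse image by simp
  then have "continuous_on UNIV (inv_into {a..b} h \<circ> clamp)"
    unfolding clamp_def using hab
    by (intro continuous_on_compose continuous_intros) (auto elim: continuous_on_subset)
  moreover have "inv_into {a..b} h (clamp L) \<in> {a..b} \<and> h (inv_into {a..b} h (clamp L)) = clamp L"
    for L
  proof -
    have "clamp L \<in> h ` {a..b}"
      unfolding image clamp_def using hab by auto
    then show ?thesis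
      using inverse by auto
  qed
  ultimately show ?thesis
    using that unfolding clamp_def by auto
qed

lemma exists_water_level:
  fixes C :: "'a \<Rightarrow> real \<Rightarrow> real"
  assumes fin: "finite A" and nonempty: "A \<noteq> {}" and "0 < r"
    and cont: "\<And>a. a \<in> A \<Longrightarrow> continuous_on {0..r} (C a)"
    and mono: "\<And>a. a \<in> A \<Longrightarrow> strict_mono_on {0..r} (C a)"
    and start: "\<And>a. a \<in> A \<Longrightarrow> C a 0 = c0"
  obtains L x where "c0 < L" and "\<And>a. a \<in> A \<Longrightarrow> x a \<in> {0..r}"
    and "\<And>a. a \<in> A \<Longrightarrow> C a (x a) = min (C a r) L" and "(\<Sum>a\<in>A. x a) = r"
proof -
  \<comment> \<open>y a L is the amount on a at which its cost reaches the level L, clamped to [0, r]\<close>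
  have "\<forall>a\<in>A. \<exists>g. continuous_on UNIV g \<and> (\<forall>L. g L \<in> {0..r} \<and> C a (g L) = max c0 (min (C a r) L))"
    using continuous_clamped_inverse[OF cont mono] start \<open>0 < r\<close> by (metis less_imp_le)
  then obtain y where y_cont: "\<And>a. a \<in> A \<Longrightarrow> continuous_on UNIV (y a)"
    and y_range: "\<And>a L. a \<in> A \<Longrightarrow> y a L \<in> {0..r}"
    and y_level: "\<And>a L. a \<in> A \<Longrightarrow> C a (y a L) = max c0 (min (C a r) L)"
    by (metis bchoice)
  have c0_less: "c0 < C a r" if "a \<in> A" for a
    using strict_mono_onD[OF mono[OF that], of 0 r] start[OF that] \<open>0 < r\<close> by simp
  have y_unique: "y a L = u" if "a \<in> A" "u \<in> {0..r}" "C a u = C a (y a L)" for a L u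
    using strict_mono_on_imp_inj_on[OF mono] y_range that by (metis inj_onD)
  define S where "S L = (\<Sum>a\<in>A. y a L)" for L
  define M where "M = Max ((\<lambda>a. C a r) ` A)"
  have "S c0 = 0"
    unfolding S_def using y_level start c0_less \<open>0 < r\<close>
    by (intro sum.neutral ballI y_unique) auto
  moreover have "S M = card A * r"
  proof -
    have "C a r \<le> M" if "a \<in> A" for a
      unfolding M_def using fin that by auto
    then have "y a M = r" if "a \<in> A" for a
      using y_level c0_less that \<open>0 < r\<close> by (intro y_unique) auto
    then show ?thesis
      unfolding S_def by simp
  qed
  moreover have "1 \<le> card A"
    using fin nonempty by (simp add: Suc_le_eq card_gt_0_iff)
  moreover obtain a0 where "a0 \<in> A"
    using nonempty by auto
  then have "c0 \<le> M"
    unfolding M_def using fin c0_less by (metis Max_ge finite_imageI image_eqI less_imp_le order_trans)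
  moreover have "continuous_on {c0..M} S"
    unfolding S_def using y_cont continuous_on_subset by (metis continuous_on_sum subset_UNIV)
  ultimately obtain L where "c0 \<le> L" "S L = r"
    using IVT'[of S c0 r M] \<open>0 < r\<close> by auto
  then have "c0 < L"
    using \<open>S c0 = 0\<close> \<open>0 < r\<close> by (cases "L = c0") auto
  moreover have "C a (y a L) = min (C a r) L" if "a \<in> A" for a
    using y_level[OF that] c0_less[OF that] \<open>c0 < L\<close> by simp
  ultimately show ?thesis
    using y_range \<open>S L = r\<close> unfolding S_def by (intro that[of L "\<lambda>a. y a L"]) simp_all
qed

lemma exists_equalizing_positive_split:
  fixes C :: "'a \<Rightarrow> real \<Rightarrow> real"
  assumes fin: "finite A" and nonempty: "A \<noteq> {}" and "0 < r"
    and cont: "\<And>a. a \<in> A \<Longrightarrow> continuous_on {0..r} (C a)"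
    and mono: "\<And>a. a \<in> A \<Longrightarrow> strict_mono_on {0..r} (C a)"
    and start: "\<And>a. a \<in> A \<Longrightarrow> C a 0 = c0"
  obtains x where "\<And>a. a \<in> A \<Longrightarrow> 0 < x a" and "(\<Sum>a\<in>A. x a) = r"
    and "\<And>a b. a \<in> A \<Longrightarrow> b \<in> A \<Longrightarrow> C a (x a) = C b (x b)"
proof -
  obtain L x where "c0 < L" and range: "\<And>a. a \<in> A \<Longrightarrow> x a \<in> {0..r}"
    and level: "\<And>a. a \<in> A \<Longrightarrow> C a (x a) = min (C a r) L" and sum: "(\<Sum>a\<in>A. x a) = r"
    using exists_water_level[of A r C c0, OF fin nonempty \<open>0 < r\<close> cont mono start] by blast
  have pos: "0 < x a" if "a \<in> A" for a
  proof -
    have "C a 0 < C a r"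
      using strict_mono_onD[OF mono[OF that], of 0 r] \<open>0 < r\<close> by simp
    then have "C a 0 < C a (x a)"
      using level[OF that] start[OF that] \<open>c0 < L\<close> by simp
    then show ?thesis
      using range[OF that] by (cases "x a = 0") auto
  qed
  \<comment> \<open>with two positive amounts each is below r, so no cost is clamped at C a r\<close>
  have "C a (x a) = L" if "a \<in> A" "b \<in> A" "a \<noteq> b" for a b
  proof -
    have "x a + x b \<le> r"
      using sum_mono2[OF fin, of "{a, b}" x] that pos sum by (force simp: less_imp_le)
    then have "x a < r"
      using pos[OF \<open>b \<in> A\<close>] by simp
    then have "C a (x a) < C a r"
      using strict_mono_onD[OF mono[OF \<open>a \<in> A\<close>], of "x a" r] range[OF \<open>a \<in> A\<close>] by simp
    then show ?thesis
      using level[OF \<open>a \<in> A\<close>] by (auto simp: min_def split: if_splits)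
  qed
  then have "C a (x a) = C b (x b)" if "a \<in> A" "b \<in> A" for a b
    using that by (cases "a = b") auto
  with pos sum show ?thesis
    using that by blast
qed

lemma routing_game_commodity:
  assumes "routing_game V E etail ehead k s t r Ps c" and "i \<in> {1..k}"
  shows "0 < r i" and "finite (Ps i)" and "Ps i \<noteq> {}" and "s i \<noteq> t i"
    and "\<And>P. P \<in> Ps i \<Longrightarrow> is_path V E etail ehead (s i) (t i) P"
  using assms unfolding routing_game_def by blast+

lemma routing_game_cost_nonneg:
  assumes "routing_game V E etail ehead k s t r Ps c" and "e \<in> E" and "0 \<le> x"
  shows "0 \<le> c e x"
  using assms unfolding routing_game_def by blast

lemma is_path_edges:
  assumes "is_path V E etail ehead u w P"
  shows "set P \<subseteq> E" and "u \<noteq> w \<Longrightarrow> P \<noteq> []"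
  using assms unfolding is_path_def by blast+

lemma routing_game_path:
  assumes game: "routing_game V E etail ehead k s t r Ps c" and "P \<in> all_paths k Ps"
  shows "P \<noteq> []" and "set P \<subseteq> E"
proof -
  obtain i where "i \<in> {1..k}" and "P \<in> Ps i"
    using assms(2) unfolding all_paths_def by blast
  then have "is_path V E etail ehead (s i) (t i) P" and "s i \<noteq> t i"
    using routing_game_commodity(4,5)[OF game] by simp_all
  then show "P \<noteq> []" and "set P \<subseteq> E"
    by (simp_all add: is_path_edges)
qed

lemma routing_game_finite_all_paths:
  assumes "routing_game V E etail ehead k s t r Ps c"
  shows "finite (all_paths k Ps)"
  unfolding all_paths_def using routing_game_commodity(2)[OF assms] by blast

lemma edge_flow_ge_path_flow:
  assumes "finite (all_paths k Ps)" and "feasible k r Ps f"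
    and "P \<in> all_paths k Ps" and "e \<in> set P"
  shows "f P \<le> edge_flow k Ps f e"
  unfolding edge_flow_def using assms by (intro member_le_sum) (auto simp: feasible_def)

lemma edge_flow_nonneg:
  assumes "feasible k r Ps f"
  shows "0 \<le> edge_flow k Ps f e"
  unfolding edge_flow_def using assms by (intro sum_nonneg) (auto simp: feasible_def)

lemma edge_flow_edge_disjoint:
  assumes disjoint: "\<forall>P\<in>all_paths k Ps. \<forall>P'\<in>all_paths k Ps. P \<noteq> P' \<longrightarrow> set P \<inter> set P' = {}"
    and "P \<in> all_paths k Ps" and "e \<in> set P"
  shows "edge_flow k Ps f e = f P"
proof -
  have "Q = P" if "Q \<in> all_paths k Ps" and "e \<in> set Q" for Q
    using disjoint assms(2,3) that by (meson disjoint_iff)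
  then have "{Q \<in> all_paths k Ps. e \<in> set Q} = {P}"
    using assms(2,3) by blast
  then show ?thesis
    unfolding edge_flow_def by simp
qed

lemma path_cost_edge_disjoint:
  assumes "\<forall>P\<in>all_paths k Ps. \<forall>P'\<in>all_paths k Ps. P \<noteq> P' \<longrightarrow> set P \<inter> set P' = {}"
    and "P \<in> all_paths k Ps"
  shows "path_cost k Ps c f P = (\<Sum>e\<leftarrow>P. c e (f P))"
  unfolding path_cost_def by (simp add: edge_flow_edge_disjoint[OF assms] cong: map_cong)

lemma total_cost_ge_edge_cost:
  assumes game: "routing_game V E etail ehead k s t r Ps c"
    and "feasible k r Ps f" and "e \<in> E"
  shows "c e (edge_flow k Ps f e) * edge_flow k Ps f e \<le> total_cost E k Ps c f"
proof -
  have "finite E"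
    using game unfolding routing_game_def by blast
  then show ?thesis
    unfolding total_cost_def
    using routing_game_cost_nonneg[OF game] edge_flow_nonneg[OF \<open>feasible k r Ps f\<close>] \<open>e \<in> E\<close>
    by (intro member_le_sum) auto
qed

lemma feasible_total_cost_bounded_below:
  assumes game: "routing_game V E etail ehead k s t r Ps c"
    and incr: "\<forall>e\<in>E. strict_mono_on {0..} (c e)"
  obtains \<delta> where "0 < \<delta>" and "\<And>f. feasible k r Ps f \<Longrightarrow> \<delta> \<le> total_cost E k Ps c f"
proof -
  have one: "1 \<in> {1..k}"
    using game unfolding routing_game_def by simp
  then have paths_one: "Ps 1 \<subseteq> all_paths k Ps"
    unfolding all_paths_def by blast
  note Ps_one = routing_game_commodity[OF game one]
  define q where "q = r 1 / card (Ps 1)"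
  define \<delta> where "\<delta> = Min ((\<lambda>P. c (hd P) q * q) ` Ps 1)"
  have "q > 0"
    unfolding q_def using Ps_one by (simp add: card_gt_0_iff)
  have hd_edge: "hd P \<in> set P \<inter> E" if "P \<in> Ps 1" for P
    using routing_game_path[OF game] paths_one that by (auto intro: hd_in_set)
  have cost_pos: "0 < c e q" if "e \<in> E" for e
    using strict_mono_onD[of "{0..}" "c e" 0 q] incr routing_game_cost_nonneg[OF game that, of 0]
      that \<open>q > 0\<close> by force
  have "0 < \<delta>"
    unfolding \<delta>_def using Ps_one hd_edge cost_pos \<open>q > 0\<close> by auto
  moreover have "\<delta> \<le> total_cost E k Ps c f" if feas: "feasible k r Ps f" for f
  proof -
    obtain P where P: "P \<in> Ps 1" and "q \<le> f P"
      using exists_ge_average[of "Ps 1" f] Ps_one feas one unfolding q_def feasible_def by metis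
    define e where "e = hd P"
    have "e \<in> set P" "e \<in> E" and P_path: "P \<in> all_paths k Ps"
      using hd_edge[OF P] P paths_one unfolding e_def by auto
    have "q \<le> edge_flow k Ps f e"
      using edge_flow_ge_path_flow[OF routing_game_finite_all_paths[OF game] feas P_path \<open>e \<in> set P\<close>]
        \<open>q \<le> f P\<close> by simp
    then have "c e q \<le> c e (edge_flow k Ps f e)"
      using strict_mono_on_leD[of "{0..}" "c e" q] incr \<open>e \<in> E\<close> \<open>q > 0\<close> by auto
    have "\<delta> \<le> c e q * q"
      unfolding \<delta>_def e_def using Ps_one P by (intro Min_le) auto
    also have "\<dots> \<le> c e (edge_flow k Ps f e) * edge_flow k Ps f e"
      using \<open>c e q \<le> c e (edge_flow k Ps f e)\<close> cost_pos[OF \<open>e \<in> E\<close>] \<open>q > 0\<close>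
        \<open>q \<le> edge_flow k Ps f e\<close> by (intro mult_mono) auto
    also have "\<dots> \<le> total_cost E k Ps c f"
      by (rule total_cost_ge_edge_cost[OF game feas \<open>e \<in> E\<close>])
    finally show ?thesis .
  qed
  ultimately show ?thesis
    by (rule that)
qed

lemma feasible_imp_transition:
  assumes "equilibrium k r Ps c f0" and "\<And>P. P \<in> all_paths k Ps \<Longrightarrow> 0 < f0 P"
    and "feasible k r Ps f"
  shows "transition k r Ps c f"
  using assms unfolding transition_def all_paths_def by blast

lemma PoTS_eq_1_if_feasible_imp_transition:
  assumes transition: "\<And>f. feasible k r Ps f \<Longrightarrow> transition k r Ps c f"
    and "feasible k r Ps f0"
    and "0 < \<delta>" and bound: "\<And>f. feasible k r Ps f \<Longrightarrow> \<delta> \<le> total_cost E k Ps c f"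
  shows "PoTS E k r Ps c = 1"
proof -
  define I where "I = (INF f\<in>{f. feasible k r Ps f}. ereal (total_cost E k Ps c f))"
  have "{f. transition k r Ps c f} = {f. feasible k r Ps f}"
    using transition unfolding transition_def by blast
  then have "PoTS E k r Ps c = I / I"
    unfolding PoTS_def I_def by simp
  moreover have "ereal \<delta> \<le> I"
    unfolding I_def using bound by (auto intro!: INF_greatest)
  moreover have "I \<le> ereal (total_cost E k Ps c f0)"
    unfolding I_def using \<open>feasible k r Ps f0\<close> by (auto intro!: INF_lower)
  ultimately show ?thesis
    using \<open>0 < \<delta>\<close> by (cases I) auto
qed

lemma exists_equalizing_commodity_split:
  assumes game: "routing_game V E etail ehead k s t r Ps c" and i: "i \<in> {1..k}"
    and cont: "\<forall>e\<in>E. continuous_on {0..} (c e)"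
    and incr: "\<forall>e\<in>E. strict_mono_on {0..} (c e)"
    and zero_eq: "\<forall>P\<in>Ps i. \<forall>P'\<in>Ps i. (\<Sum>e\<leftarrow>P. c e 0) = (\<Sum>e\<leftarrow>P'. c e 0)"
  obtains x where "\<And>P. P \<in> Ps i \<Longrightarrow> 0 < x P" and "(\<Sum>P\<in>Ps i. x P) = r i"
    and "\<And>P P'. P \<in> Ps i \<Longrightarrow> P' \<in> Ps i \<Longrightarrow> (\<Sum>e\<leftarrow>P. c e (x P)) = (\<Sum>e\<leftarrow>P'. c e (x P'))"
proof -
  note commodity = routing_game_commodity[OF game i]
  obtain P0 where "P0 \<in> Ps i"
    using commodity(3) by blast
  have interval: "{0..r i} \<subseteq> {0..}"
    by auto
  have "continuous_on {0..r i} (\<lambda>x. \<Sum>e\<leftarrow>P. c e x)" "strict_mono_on {0..r i} (\<lambda>x. \<Sum>e\<leftarrow>P. c e x)"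
    if "P \<in> Ps i" for P
  proof -
    have "P \<in> all_paths k Ps"
      using i that unfolding all_paths_def by blast
    then have "P \<noteq> []" "set P \<subseteq> E"
      using routing_game_path[OF game] by auto
    then show "continuous_on {0..r i} (\<lambda>x. \<Sum>e\<leftarrow>P. c e x)"
      "strict_mono_on {0..r i} (\<lambda>x. \<Sum>e\<leftarrow>P. c e x)"
      using cont incr
      by (auto intro!: continuous_on_sum_list strict_mono_on_sum_list
          intro: continuous_on_subset[OF _ interval] monotone_on_subset[OF _ interval])
  qed
  moreover have "(\<Sum>e\<leftarrow>P. c e 0) = (\<Sum>e\<leftarrow>P0. c e 0)" if "P \<in> Ps i" for P
    using zero_eq \<open>P0 \<in> Ps i\<close> that by blast
  ultimately show ?thesis
    using exists_equalizing_positive_split[of "Ps i" "r i" "\<lambda>P x. \<Sum>e\<leftarrow>P. c e x"] commodity that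
    by blast
qed

(* The path sets of distinct commodities are disjoint, so at most one summand is nonzero. *)
definition combine_flows :: "nat \<Rightarrow> (nat \<Rightarrow> 'e list set) \<Rightarrow> (nat \<Rightarrow> 'e list \<Rightarrow> real) \<Rightarrow> 'e list \<Rightarrow> real"
  where "combine_flows k Ps X P = (\<Sum>j\<in>{1..k}. if P \<in> Ps j then X j P else 0)"

lemma combine_flows_commodity:
  assumes game: "routing_game V E etail ehead k s t r Ps c"
    and i: "i \<in> {1..k}" and "P \<in> Ps i"
  shows "combine_flows k Ps X P = X i P"
proof -
  have "P \<in> Ps j \<longleftrightarrow> j = i" if "j \<in> {1..k}" for j
    using game \<open>P \<in> Ps i\<close> i that unfolding routing_game_def by blast
  then have "combine_flows k Ps X P = (\<Sum>j\<in>{1..k}. if j = i then X j P else 0)"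
    unfolding combine_flows_def by (intro sum.cong) auto
  then show ?thesis
    using i by simp
qed

lemma feasible_combine_flows:
  assumes game: "routing_game V E etail ehead k s t r Ps c"
    and nonneg: "\<And>i P. i \<in> {1..k} \<Longrightarrow> P \<in> Ps i \<Longrightarrow> 0 \<le> X i P"
    and sum: "\<And>i. i \<in> {1..k} \<Longrightarrow> (\<Sum>P\<in>Ps i. X i P) = r i"
  shows "feasible k r Ps (combine_flows k Ps X)"
  unfolding feasible_def
proof (intro conjI allI impI ballI)
  fix P
  show "0 \<le> combine_flows k Ps X P"
    unfolding combine_flows_def using nonneg by (intro sum_nonneg) auto
  show "P \<notin> all_paths k Ps \<Longrightarrow> combine_flows k Ps X P = 0"
    unfolding combine_flows_def all_paths_def by (auto intro!: sum.neutral)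
next
  fix i assume "i \<in> {1..k}"
  then show "(\<Sum>P\<in>Ps i. combine_flows k Ps X P) = r i"
    using combine_flows_commodity[OF game] sum by simp
qed

lemma exists_equilibrium_positive_on_all_paths:
  assumes game: "routing_game V E etail ehead k s t r Ps c"
    and disjoint: "\<forall>P\<in>all_paths k Ps. \<forall>P'\<in>all_paths k Ps. P \<noteq> P' \<longrightarrow> set P \<inter> set P' = {}"
    and cont: "\<forall>e\<in>E. continuous_on {0..} (c e)"
    and incr: "\<forall>e\<in>E. strict_mono_on {0..} (c e)"
    and zero_eq: "\<forall>i\<in>{1..k}. \<forall>P\<in>Ps i. \<forall>P'\<in>Ps i. (\<Sum>e\<leftarrow>P. c e 0) = (\<Sum>e\<leftarrow>P'. c e 0)"
  obtains f0 where "equilibrium k r Ps c f0" and "\<And>P. P \<in> all_paths k Ps \<Longrightarrow> 0 < f0 P"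
proof -
  have "\<forall>i\<in>{1..k}. \<exists>x. (\<forall>P\<in>Ps i. 0 < x P) \<and> (\<Sum>P\<in>Ps i. x P) = r i \<and>
      (\<forall>P\<in>Ps i. \<forall>P'\<in>Ps i. (\<Sum>e\<leftarrow>P. c e (x P)) = (\<Sum>e\<leftarrow>P'. c e (x P')))"
  proof
    fix i assume i: "i \<in> {1..k}"
    obtain x where "\<And>P. P \<in> Ps i \<Longrightarrow> 0 < x P" and "(\<Sum>P\<in>Ps i. x P) = r i"
      and "\<And>P P'. P \<in> Ps i \<Longrightarrow> P' \<in> Ps i \<Longrightarrow> (\<Sum>e\<leftarrow>P. c e (x P)) = (\<Sum>e\<leftarrow>P'. c e (x P'))"
      using exists_equalizing_commodity_split[OF game i cont incr] zero_eq i by blast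
    then show "\<exists>x. (\<forall>P\<in>Ps i. 0 < x P) \<and> (\<Sum>P\<in>Ps i. x P) = r i \<and>
        (\<forall>P\<in>Ps i. \<forall>P'\<in>Ps i. (\<Sum>e\<leftarrow>P. c e (x P)) = (\<Sum>e\<leftarrow>P'. c e (x P')))"
      by blast
  qed
  then obtain X where X: "\<forall>i\<in>{1..k}. (\<forall>P\<in>Ps i. 0 < X i P) \<and> (\<Sum>P\<in>Ps i. X i P) = r i \<and>
      (\<forall>P\<in>Ps i. \<forall>P'\<in>Ps i. (\<Sum>e\<leftarrow>P. c e (X i P)) = (\<Sum>e\<leftarrow>P'. c e (X i P')))"
    by (metis bchoice)
  define f0 where "f0 = combine_flows k Ps X"
  have f0_commodity: "f0 P = X i P" if "i \<in> {1..k}" and "P \<in> Ps i" for i P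
    unfolding f0_def using combine_flows_commodity[OF game that] .
  have "feasible k r Ps f0"
    unfolding f0_def using X by (intro feasible_combine_flows[OF game]) (auto intro: less_imp_le)
  moreover have "path_cost k Ps c f0 P \<le> path_cost k Ps c f0 P'"
    if i: "i \<in> {1..k}" and P: "P \<in> Ps i" and P': "P' \<in> Ps i" for i P P'
  proof -
    have "P \<in> all_paths k Ps" "P' \<in> all_paths k Ps"
      using i P P' unfolding all_paths_def by blast+
    moreover have "(\<Sum>e\<leftarrow>P. c e (X i P)) = (\<Sum>e\<leftarrow>P'. c e (X i P'))"
      using X i P P' by blast
    ultimately show ?thesis
      by (simp add: path_cost_edge_disjoint[OF disjoint] f0_commodity[OF i P] f0_commodity[OF i P'])
  qed
  ultimately have "equilibrium k r Ps c f0"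
    unfolding equilibrium_def by blast
  moreover have "0 < f0 P" if "P \<in> all_paths k Ps" for P
  proof -
    obtain i where "i \<in> {1..k}" and "P \<in> Ps i"
      using \<open>P \<in> all_paths k Ps\<close> unfolding all_paths_def by blast
    then show ?thesis
      using X f0_commodity by simp
  qed
  ultimately show ?thesis
    by (rule that)
qed

theorem proposition6:
  fixes V :: "'v set" and E :: "'e set" and etail ehead :: "'e \<Rightarrow> 'v"
    and k :: nat and s t :: "nat \<Rightarrow> 'v" and r :: "nat \<Rightarrow> real"
    and Ps :: "nat \<Rightarrow> 'e list set" and c :: "'e \<Rightarrow> real \<Rightarrow> real"
  assumes game: "routing_game V E etail ehead k s t r Ps c"
    and disjoint: "\<forall>P\<in>all_paths k Ps. \<forall>P'\<in>all_paths k Ps. P \<noteq> P' \<longrightarrow> set P \<inter> set P' = {}"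
    and cont: "\<forall>e\<in>E. continuous_on {0..} (c e)"
    and incr: "\<forall>e\<in>E. strict_mono_on {0..} (c e)"
    and zero_eq: "\<forall>i\<in>{1..k}. \<forall>P\<in>Ps i. \<forall>P'\<in>Ps i.
                    (\<Sum>e\<leftarrow>P. c e 0) = (\<Sum>e\<leftarrow>P'. c e 0)"
  shows "PoTS E k r Ps c = 1"
proof -
  obtain f0 where eq: "equilibrium k r Ps c f0" and pos: "\<And>P. P \<in> all_paths k Ps \<Longrightarrow> 0 < f0 P"
    using exists_equilibrium_positive_on_all_paths[OF game disjoint cont incr zero_eq] by blast
  have "feasible k r Ps f0"
    using eq unfolding equilibrium_def by blast
  moreover obtain \<delta> where "0 < \<delta>" and "\<And>f. feasible k r Ps f \<Longrightarrow> \<delta> \<le> total_cost E k Ps c f"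
    using feasible_total_cost_bounded_below[OF game incr] by blast
  ultimately show ?thesis
    using PoTS_eq_1_if_feasible_imp_transition feasible_imp_transition[OF eq pos] by metis
qed

end
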